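(* Let $\tau>0$, $0\le\lambda<1$, $u_n\in\mathcal V_{[0,1]}$, $M:=\mathcal M(u_n)$. Then the problem \[ \min\left\{(1-\lambda)\|u\|_{\mathcal V}^2-2\langle u,e^{-\tau\Delta}u_n\rangle_{\mathcal V}\ :\ u\in\mathcal V_{[0,1]},\ \mathcal M(u)=M\right\} \] has a unique solution $u^\lambda_{n+1}$, given by \[ (u^\lambda _{n+1})_i=\begin{cases} 0, &\text{if } \nu\geq (e^{-\tau\Delta}u_n)_i, \\ \frac{(e^{-\tau\Delta}u_n)_i - \nu}{1-\lambda}, &\text{if } (e^{-\tau\Delta}u_n)_i - (1-\lambda)<\nu<(e^{-\tau\Delta}u_n)_i,\\ 1, &\text{if } \nu \leq (e^{-\tau\Delta}u_n)_i - (1-\lambda), \end{cases} \] where $\nu$ is a solution of \[ M = \sum_{\alpha \in A} a_{\alpha} \begin{cases} 1, & \nu \leq \alpha -(1-\lambda),\\ \frac{\alpha-\nu}{1-\lambda}, & \alpha-(1-\lambda)<\nu < \alpha,\\ 0, &\nu\geq \alpha; \end{cases} \] such a $\nu$ can be taken in $[0,\lambda]$.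
   Context: $G=(V,E)$ is a finite, simple, connected, undirected graph with weights $\omega_{ij}=\omega_{ji}>0$ for $ij\in E$, $\omega_{ij}=0$ otherwise; $d_i=\sum_j\omega_{ij}$, $r\in[0,1]$ fixed. $\mathcal V$ = functions $V\to\mathbb R$ with $\langle u,v\rangle_{\mathcal V}=\sum_i u_iv_id_i^r$ and norm $\|\cdot\|_{\mathcal V}$; $\mathcal V_{[0,1]}$ = functions $V\to[0,1]$. $(\Delta u)_i=d_i^{-r}\sum_j\omega_{ij}(u_i-u_j)$, $e^{-\tau\Delta}$ its matrix exponential. $\mathbf 1$ all-ones; $\mathcal M(u)=\langle u,\mathbf 1\rangle_{\mathcal V}$. $A$ is the set of values of $e^{-\tau\Delta}u_n$, and $a_\alpha:=\sum_{i:(e^{-\tau\Delta}u_n)_i=\alpha}d_i^r$. *)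

theory Defs
  imports "HOL-Analysis.Analysis"
begin

definition weighted_graph :: "('v::finite \<Rightarrow> 'v \<Rightarrow> real) \<Rightarrow> bool" where
  "weighted_graph w \<longleftrightarrow>
     (\<forall>i j. w i j = w j i) \<and> (\<forall>i j. w i j \<ge> 0) \<and> (\<forall>i. w i i = 0)
     \<and> (\<forall>i j. (\<lambda>x y. w x y > 0)\<^sup>*\<^sup>* i j)"

definition deg :: "('v::finite \<Rightarrow> 'v \<Rightarrow> real) \<Rightarrow> 'v \<Rightarrow> real" where
  "deg w i = (\<Sum>j\<in>UNIV. w i j)"

definition ipV :: "('v::finite \<Rightarrow> 'v \<Rightarrow> real) \<Rightarrow> real \<Rightarrow> ('v \<Rightarrow> real) \<Rightarrow> ('v \<Rightarrow> real) \<Rightarrow> real" where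
  "ipV w r u v = (\<Sum>i\<in>UNIV. u i * v i * deg w i powr r)"

definition normV_sq :: "('v::finite \<Rightarrow> 'v \<Rightarrow> real) \<Rightarrow> real \<Rightarrow> ('v \<Rightarrow> real) \<Rightarrow> real" where
  "normV_sq w r u = ipV w r u u"

definition mass :: "('v::finite \<Rightarrow> 'v \<Rightarrow> real) \<Rightarrow> real \<Rightarrow> ('v \<Rightarrow> real) \<Rightarrow> real" where
  "mass w r u = ipV w r u (\<lambda>_. 1)"

definition graph_laplacian :: "('v::finite \<Rightarrow> 'v \<Rightarrow> real) \<Rightarrow> real \<Rightarrow> ('v \<Rightarrow> real) \<Rightarrow> ('v \<Rightarrow> real)" where
  "graph_laplacian w r u = (\<lambda>i. deg w i powr (- r) * (\<Sum>j\<in>UNIV. w i j * (u i - u j)))"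

definition heat :: "('v::finite \<Rightarrow> 'v \<Rightarrow> real) \<Rightarrow> real \<Rightarrow> real \<Rightarrow> ('v \<Rightarrow> real) \<Rightarrow> ('v \<Rightarrow> real)" where
  "heat w r \<tau> u = (\<lambda>i. (\<Sum>k. ((- \<tau>) ^ k / fact k) * ((graph_laplacian w r ^^ k) u) i))"

definition V01 :: "('v \<Rightarrow> real) set" where
  "V01 = {u. \<forall>i. 0 \<le> u i \<and> u i \<le> 1}"

definition clip_profile :: "real \<Rightarrow> real \<Rightarrow> real \<Rightarrow> real" where
  "clip_profile lam x \<nu> =
     (if \<nu> \<ge> x then 0
      else if \<nu> \<le> x - (1 - lam) then 1
      else (x - \<nu>) / (1 - lam))"

end

theory Submission
  imports Defs
begin

(*
  Write the Laplacian as \<Delta> = c I - Q with c = \<Sum>i d_i^(1-r). Since c dominates every diagonal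
  entry d_i^(1-r) of \<Delta>, the operator Q has nonnegative entries, is order preserving and maps
  the constant 1 to c. The binomial theorem for the commuting pair Q, c I turns the exponential
  series into e^(-\<tau>\<Delta>) = e^(-c\<tau>) e^(\<tau>Q), and 0 \<le> Q^j u \<le> c^j for u with values in [0,1]
  gives 0 \<le> e^(-\<tau>\<Delta>) u \<le> 1. The weights are symmetric, so \<Delta> has total mass zero and the heat
  flow conserves mass.

  With m_i = d_i^r and U = e^(-\<tau>\<Delta>) u_n, the functional is J(v) = \<Sum>i m_i ((1-\<lambda>) v_i^2 - 2 v_i U_i).
  For any \<nu>, the clipped value u_i = clip(U_i, \<nu>) satisfies the pointwise variational inequality
  (v - u) ((1-\<lambda>) u - U_i + \<nu>) \<ge> 0 on [0,1], so on the mass constraint J(v) exceeds J(u) by at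
  least (1-\<lambda>) \<Sum>i m_i (v_i - u_i)^2. A matching \<nu> exists in [0, \<lambda>] by the intermediate value
  theorem, because clip(x, 0) \<ge> x \<ge> clip(x, \<lambda>) for x in [0,1].
*)

lemma weighted_graph_nonneg: "weighted_graph w \<Longrightarrow> 0 \<le> w i j"
  unfolding weighted_graph_def by blast

lemma weighted_graph_sym: "weighted_graph w \<Longrightarrow> w i j = w j i"
  unfolding weighted_graph_def by blast

lemma deg_nonneg: "weighted_graph w \<Longrightarrow> 0 \<le> deg w i"
  unfolding deg_def by (simp add: sum_nonneg weighted_graph_nonneg)

lemma deg_pos:
  fixes w :: "'v::finite \<Rightarrow> 'v \<Rightarrow> real"
  assumes wg: "weighted_graph w" and card: "CARD('v) \<ge> 2"
  shows "0 < deg w i"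
proof -
  obtain j where "j \<noteq> i"
    using card card_mono[of "{i}" UNIV] by fastforce
  have "(\<lambda>x y. w x y > 0)\<^sup>*\<^sup>* i j"
    using wg unfolding weighted_graph_def by blast
  then obtain k where "w i k > 0"
    using \<open>j \<noteq> i\<close> by (cases rule: converse_rtranclpE) auto
  moreover have "w i k \<le> deg w i"
    unfolding deg_def by (rule member_le_sum) (auto simp: weighted_graph_nonneg[OF wg])
  ultimately show ?thesis by linarith
qed

definition l1_norm :: "('a::finite \<Rightarrow> real) \<Rightarrow> real" where
  "l1_norm v = (\<Sum>j\<in>UNIV. \<bar>v j\<bar>)"

lemma abs_le_l1_norm: "\<bar>v i\<bar> \<le> l1_norm v"
  unfolding l1_norm_def by (rule member_le_sum) auto

lemma l1_norm_nonneg: "0 \<le> l1_norm v"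
  unfolding l1_norm_def by (simp add: sum_nonneg)

lemma funpow_abs_le_l1_norm:
  fixes F :: "('a::finite \<Rightarrow> real) \<Rightarrow> 'a \<Rightarrow> real"
  assumes F: "\<And>v i. \<bar>F v i\<bar> \<le> K * l1_norm v" and K: "0 \<le> K"
  shows "\<bar>(F ^^ k) u i\<bar> \<le> (real CARD('a) * K) ^ k * l1_norm u"
proof -
  have "l1_norm ((F ^^ k) u) \<le> (real CARD('a) * K) ^ k * l1_norm u"
  proof (induction k)
    case 0
    then show ?case by simp
  next
    case (Suc k)
    have "l1_norm ((F ^^ Suc k) u) = (\<Sum>j\<in>UNIV. \<bar>F ((F ^^ k) u) j\<bar>)"
      by (simp add: l1_norm_def)
    also have "\<dots> \<le> (\<Sum>j\<in>(UNIV::'a set). K * l1_norm ((F ^^ k) u))"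
      by (rule sum_mono) (rule F)
    also have "\<dots> \<le> real CARD('a) * K * ((real CARD('a) * K) ^ k * l1_norm u)"
      using Suc K by (simp add: mult_left_mono)
    finally show ?case by (simp add: algebra_simps)
  qed
  then show ?thesis
    using abs_le_l1_norm[of "(F ^^ k) u" i] by linarith
qed

lemma summable_exp_series_funpow:
  fixes F :: "('a::finite \<Rightarrow> real) \<Rightarrow> 'a \<Rightarrow> real"
  assumes F: "\<And>v i. \<bar>F v i\<bar> \<le> K * l1_norm v" and K: "0 \<le> K"
  shows "summable (\<lambda>k. \<bar>t ^ k / fact k * (F ^^ k) u i\<bar>)"
proof (rule summable_comparison_test)
  let ?x = "\<bar>t\<bar> * (real CARD('a) * K)"
  show "summable (\<lambda>k. l1_norm u * (?x ^ k / fact k))"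
    using summable_exp[of ?x] by (simp add: divide_inverse mult.commute summable_mult)
  have "\<bar>t ^ k / fact k * (F ^^ k) u i\<bar> \<le> l1_norm u * (?x ^ k / fact k)" for k
  proof -
    have "\<bar>t ^ k / fact k * (F ^^ k) u i\<bar> = \<bar>t\<bar> ^ k / fact k * \<bar>(F ^^ k) u i\<bar>"
      by (simp add: abs_mult power_abs)
    also have "\<dots> \<le> \<bar>t\<bar> ^ k / fact k * ((real CARD('a) * K) ^ k * l1_norm u)"
      by (intro mult_left_mono funpow_abs_le_l1_norm[OF F K]) auto
    finally show ?thesis
      by (simp add: power_mult_distrib field_simps)
  qed
  then show "\<exists>N. \<forall>k\<ge>N. norm \<bar>t ^ k / fact k * (F ^^ k) u i\<bar> \<le> l1_norm u * (?x ^ k / fact k)"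
    by auto
qed

lemma funpow_add_scaled_id:
  fixes P :: "('a \<Rightarrow> real) \<Rightarrow> 'a \<Rightarrow> real"
  assumes P_sum: "\<And>(S::nat set) f. finite S \<Longrightarrow> P (\<lambda>i. \<Sum>s\<in>S. f s i) = (\<lambda>i. \<Sum>s\<in>S. P (f s) i)"
    and P_scale: "\<And>c v. P (\<lambda>i. c * v i) = (\<lambda>i. c * P v i)"
  shows "((\<lambda>v i. P v i + b * v i) ^^ k) u = (\<lambda>i. \<Sum>j\<le>k. real (k choose j) * b ^ (k - j) * (P ^^ j) u i)"
proof (induction k)
  case 0
  then show ?case by simp
next
  case (Suc k)
  let ?R = "\<lambda>j. (P ^^ j) u"
  have P_step: "P (\<lambda>i. \<Sum>j\<le>k. real (k choose j) * b ^ (k - j) * ?R j i) =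
      (\<lambda>i. \<Sum>j\<le>k. real (k choose j) * b ^ (k - j) * ?R (Suc j) i)"
    by (simp add: P_sum P_scale[of "real (k choose j) * b ^ (k - j)" for j])
  show ?case
  proof
    fix i
    have "b * (\<Sum>j\<le>k. real (k choose j) * b ^ (k - j) * ?R j i) =
        (\<Sum>j\<le>k. real (k choose j) * b ^ (Suc k - j) * ?R j i)"
      by (auto simp: sum_distrib_left Suc_diff_le intro!: sum.cong)
    also have "\<dots> = b ^ Suc k * ?R 0 i + (\<Sum>j<k. real (k choose Suc j) * b ^ (k - j) * ?R (Suc j) i)"
      by (simp add: sum.atMost_shift)
    also have "\<dots> = b ^ Suc k * ?R 0 i + (\<Sum>j\<le>k. real (k choose Suc j) * b ^ (k - j) * ?R (Suc j) i)"
      by (simp add: lessThan_Suc_atMost[symmetric])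
    finally have scaled: "b * (\<Sum>j\<le>k. real (k choose j) * b ^ (k - j) * ?R j i) =
        b ^ Suc k * ?R 0 i + (\<Sum>j\<le>k. real (k choose Suc j) * b ^ (k - j) * ?R (Suc j) i)" .
    have pascal: "(\<Sum>j\<le>Suc k. real (Suc k choose j) * b ^ (Suc k - j) * ?R j i) =
        b ^ Suc k * ?R 0 i + (\<Sum>j\<le>k. real (k choose j) * b ^ (k - j) * ?R (Suc j) i)
        + (\<Sum>j\<le>k. real (k choose Suc j) * b ^ (k - j) * ?R (Suc j) i)"
      unfolding sum.atMost_Suc_shift by (simp add: sum.distrib[symmetric] algebra_simps)
    show "((\<lambda>v i. P v i + b * v i) ^^ Suc k) u i =
        (\<Sum>j\<le>Suc k. real (Suc k choose j) * b ^ (Suc k - j) * ?R j i)"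
      unfolding pascal using Suc P_step scaled by simp
  qed
qed

lemma exp_series_add_scaled_id:
  fixes P :: "('a::finite \<Rightarrow> real) \<Rightarrow> 'a \<Rightarrow> real"
  assumes P_sum: "\<And>(S::nat set) f. finite S \<Longrightarrow> P (\<lambda>i. \<Sum>s\<in>S. f s i) = (\<lambda>i. \<Sum>s\<in>S. P (f s) i)"
    and P_scale: "\<And>c v. P (\<lambda>i. c * v i) = (\<lambda>i. c * P v i)"
    and P_bound: "\<And>v i. \<bar>P v i\<bar> \<le> K * l1_norm v" and K: "0 \<le> K"
  shows "(\<Sum>k. t ^ k / fact k * ((\<lambda>v i. P v i + b * v i) ^^ k) u i) =
      exp (b * t) * (\<Sum>k. t ^ k / fact k * (P ^^ k) u i)"
proof -
  define p where "p = (\<lambda>j. t ^ j / fact j * (P ^^ j) u i)"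
  define e where "e = (\<lambda>m. (b * t) ^ m / fact m)"
  have p_summable: "summable (\<lambda>j. norm (p j))"
    unfolding p_def real_norm_def by (rule summable_exp_series_funpow[OF P_bound K])
  have e_summable: "summable (\<lambda>m. norm (e m))"
    unfolding e_def using summable_exp[of "\<bar>b * t\<bar>"]
    by (simp add: abs_mult power_abs divide_inverse mult.commute)
  have e_sum: "suminf e = exp (b * t)"
    using exp_converges[of "b * t"] unfolding e_def by (simp add: sums_iff divide_inverse mult.commute)
  have "t ^ k / fact k * ((\<lambda>v i. P v i + b * v i) ^^ k) u i = (\<Sum>j\<le>k. p j * e (k - j))" for k
  proof -
    have "t ^ k / fact k * ((\<lambda>v i. P v i + b * v i) ^^ k) u i =
        (\<Sum>j\<le>k. t ^ k / fact k * (real (k choose j) * b ^ (k - j) * (P ^^ j) u i))"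
      by (simp add: funpow_add_scaled_id[OF P_sum P_scale] sum_distrib_left)
    also have "\<dots> = (\<Sum>j\<le>k. p j * e (k - j))"
    proof (rule sum.cong)
      fix j assume "j \<in> {..k}"
      then have "j \<le> k" by simp
      then have "t ^ k = t ^ j * t ^ (k - j)" and "real (k choose j) = fact k / (fact j * fact (k - j))"
        by (simp_all add: power_add[symmetric] binomial_fact)
      then show "t ^ k / fact k * (real (k choose j) * b ^ (k - j) * (P ^^ j) u i) = p j * e (k - j)"
        unfolding p_def e_def by (simp add: power_mult_distrib field_simps)
    qed simp
    finally show ?thesis .
  qed
  then have "(\<Sum>k. t ^ k / fact k * ((\<lambda>v i. P v i + b * v i) ^^ k) u i) = (\<Sum>k. \<Sum>j\<le>k. p j * e (k - j))"
    by simp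
  also have "\<dots> = suminf p * suminf e"
    by (rule Cauchy_product[symmetric, OF p_summable e_summable])
  finally show ?thesis
    unfolding e_sum p_def by simp
qed

definition lap_shift :: "('v::finite \<Rightarrow> 'v \<Rightarrow> real) \<Rightarrow> real \<Rightarrow> real" where
  "lap_shift w r = (\<Sum>i\<in>UNIV. deg w i powr (- r) * deg w i)"

definition shift_minus_lap :: "('v::finite \<Rightarrow> 'v \<Rightarrow> real) \<Rightarrow> real \<Rightarrow> ('v \<Rightarrow> real) \<Rightarrow> 'v \<Rightarrow> real" where
  "shift_minus_lap w r v = (\<lambda>i. (lap_shift w r - deg w i powr (- r) * deg w i) * v i
      + deg w i powr (- r) * (\<Sum>j\<in>UNIV. w i j * v j))"

lemma graph_laplacian_eq_shift:
  "graph_laplacian w r v i = lap_shift w r * v i - shift_minus_lap w r v i"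
  unfolding graph_laplacian_def shift_minus_lap_def deg_def
  by (simp add: algebra_simps sum_subtractf sum_distrib_left sum_distrib_right)

lemma lap_diag_bounds:
  assumes "weighted_graph w"
  shows "0 \<le> deg w i powr (- r) * deg w i" and "deg w i powr (- r) * deg w i \<le> lap_shift w r"
  using assms unfolding lap_shift_def
  by (auto intro!: member_le_sum mult_nonneg_nonneg deg_nonneg)

lemma lap_shift_nonneg: "weighted_graph w \<Longrightarrow> 0 \<le> lap_shift w r"
  using lap_diag_bounds by (meson order_trans)

lemma shift_minus_lap_mono:
  assumes wg: "weighted_graph w" and le: "\<And>j. v j \<le> v' j"
  shows "shift_minus_lap w r v i \<le> shift_minus_lap w r v' i"
  unfolding shift_minus_lap_def using lap_diag_bounds[OF wg, of i r] le
  by (auto intro!: add_mono mult_left_mono sum_mono weighted_graph_nonneg[OF wg])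

lemma shift_minus_lap_const: "shift_minus_lap w r (\<lambda>_. b) i = lap_shift w r * b"
  unfolding shift_minus_lap_def deg_def by (simp add: algebra_simps flip: sum_distrib_left sum_distrib_right)

lemma shift_minus_lap_sum:
  "finite S \<Longrightarrow> shift_minus_lap w r (\<lambda>i. \<Sum>s\<in>S. f s i) = (\<lambda>i. \<Sum>s\<in>S. shift_minus_lap w r (f s) i)"
  unfolding shift_minus_lap_def
  by (auto simp: sum_distrib_left sum.distrib intro!: ext arg_cong2[where f="(+)"] sum.swap)

lemma shift_minus_lap_scale:
  "shift_minus_lap w r (\<lambda>i. c * v i) = (\<lambda>i. c * shift_minus_lap w r v i)"
  unfolding shift_minus_lap_def by (auto simp: sum_distrib_left algebra_simps)

lemma shift_minus_lap_bound:
  assumes wg: "weighted_graph w"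
  shows "\<bar>shift_minus_lap w r v i\<bar> \<le> 2 * lap_shift w r * l1_norm v"
proof -
  let ?c = "lap_shift w r" and ?e = "deg w i powr (- r)"
  have diag: "\<bar>(?c - ?e * deg w i) * v i\<bar> \<le> ?c * l1_norm v"
    using lap_diag_bounds[OF wg, of i r] abs_le_l1_norm[of v i] l1_norm_nonneg[of v]
    by (auto simp: abs_mult intro!: mult_mono)
  have "\<bar>\<Sum>j\<in>UNIV. w i j * v j\<bar> \<le> (\<Sum>j\<in>UNIV. w i j * l1_norm v)"
    by (rule order_trans[OF sum_abs])
      (auto simp: abs_mult weighted_graph_nonneg[OF wg] intro!: sum_mono mult_left_mono abs_le_l1_norm)
  also have "\<dots> = deg w i * l1_norm v"
    unfolding deg_def by (simp add: sum_distrib_right)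
  finally have "\<bar>?e * (\<Sum>j\<in>UNIV. w i j * v j)\<bar> \<le> ?e * deg w i * l1_norm v"
    by (simp add: abs_mult mult_left_mono mult.assoc)
  also have "\<dots> \<le> ?c * l1_norm v"
    using lap_diag_bounds[OF wg, of i r] l1_norm_nonneg[of v] by (simp add: mult_right_mono)
  finally show ?thesis
    using diag abs_triangle_ineq[of "(?c - ?e * deg w i) * v i" "?e * (\<Sum>j\<in>UNIV. w i j * v j)"]
    unfolding shift_minus_lap_def by linarith
qed

lemma graph_laplacian_bound:
  assumes wg: "weighted_graph w"
  shows "\<bar>graph_laplacian w r v i\<bar> \<le> 3 * lap_shift w r * l1_norm v"
proof -
  have "\<bar>lap_shift w r * v i\<bar> \<le> lap_shift w r * l1_norm v"
    using lap_shift_nonneg[OF wg] abs_le_l1_norm[of v i] by (simp add: abs_mult mult_left_mono)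
  then show ?thesis
    unfolding graph_laplacian_eq_shift using shift_minus_lap_bound[OF wg, of r v i] by linarith
qed

lemma graph_laplacian_funpow:
  "(graph_laplacian w r ^^ k) u =
    (\<lambda>i. (- 1) ^ k * ((\<lambda>v i. shift_minus_lap w r v i + (- lap_shift w r) * v i) ^^ k) u i)"
proof (induction k)
  case 0
  then show ?case by simp
next
  case (Suc k)
  then show ?case
    by (simp add: graph_laplacian_eq_shift shift_minus_lap_scale algebra_simps)
qed

lemma heat_eq_exp_series:
  assumes wg: "weighted_graph w"
  shows "heat w r \<tau> u i = exp (- lap_shift w r * \<tau>) * (\<Sum>k. \<tau> ^ k / fact k * (shift_minus_lap w r ^^ k) u i)"
proof -
  have "(- \<tau>) ^ k * (- 1) ^ k = \<tau> ^ k" for k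
    by (simp flip: power_mult_distrib)
  then have "heat w r \<tau> u i =
      (\<Sum>k. \<tau> ^ k / fact k * ((\<lambda>v i. shift_minus_lap w r v i + (- lap_shift w r) * v i) ^^ k) u i)"
    unfolding heat_def graph_laplacian_funpow by (simp add: mult.assoc[symmetric])
  also have "\<dots> = exp (- lap_shift w r * \<tau>) * (\<Sum>k. \<tau> ^ k / fact k * (shift_minus_lap w r ^^ k) u i)"
    using lap_shift_nonneg[OF wg, of r]
    by (intro exp_series_add_scaled_id[where P = "shift_minus_lap w r" and K = "2 * lap_shift w r"])
      (simp_all add: shift_minus_lap_sum shift_minus_lap_scale shift_minus_lap_bound[OF wg])
  finally show ?thesis .
qed

lemma shift_minus_lap_funpow_bounds:
  assumes wg: "weighted_graph w" and u: "u \<in> V01"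
  shows "0 \<le> (shift_minus_lap w r ^^ j) u i \<and> (shift_minus_lap w r ^^ j) u i \<le> lap_shift w r ^ j"
proof (induction j arbitrary: i)
  case 0
  then show ?case using u by (simp add: V01_def)
next
  case (Suc j)
  show ?case
    using shift_minus_lap_mono[OF wg, of "\<lambda>_. 0" "(shift_minus_lap w r ^^ j) u" r i]
      shift_minus_lap_mono[OF wg, of "(shift_minus_lap w r ^^ j) u" "\<lambda>_. lap_shift w r ^ j" r i]
      Suc by (simp add: shift_minus_lap_const)
qed

lemma heat_in_V01:
  assumes wg: "weighted_graph w" and u: "u \<in> V01" and "0 \<le> \<tau>"
  shows "heat w r \<tau> u \<in> V01"
proof -
  let ?c = "lap_shift w r"
  have "0 \<le> heat w r \<tau> u i \<and> heat w r \<tau> u i \<le> 1" for i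
  proof -
    define p where "p = (\<lambda>j. \<tau> ^ j / fact j * (shift_minus_lap w r ^^ j) u i)"
    have "summable (\<lambda>j. \<bar>p j\<bar>)"
      unfolding p_def using lap_shift_nonneg[OF wg, of r]
      by (intro summable_exp_series_funpow[where K = "2 * ?c"]) (simp_all add: shift_minus_lap_bound[OF wg])
    then have p_sums: "p sums suminf p"
      using summable_rabs_cancel summable_sums by blast
    have exp_sums: "(\<lambda>j. \<tau> ^ j / fact j * ?c ^ j) sums exp (?c * \<tau>)"
      using exp_converges[of "?c * \<tau>"] by (simp add: power_mult_distrib divide_inverse mult_ac)
    have p_nonneg: "0 \<le> p j" and p_le: "p j \<le> \<tau> ^ j / fact j * ?c ^ j" for j
      unfolding p_def using shift_minus_lap_funpow_bounds[OF wg u, where r = r and j = j and i = i] \<open>0 \<le> \<tau>\<close>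
      by (auto intro!: mult_left_mono divide_right_mono)
    have "0 \<le> suminf p"
      using p_nonneg p_sums by (meson sums_summable suminf_nonneg)
    moreover have "suminf p \<le> exp (?c * \<tau>)"
      using p_le by (intro sums_le[OF _ p_sums exp_sums]) auto
    moreover have "heat w r \<tau> u i = suminf p * exp (- ?c * \<tau>)"
      unfolding p_def heat_eq_exp_series[OF wg] by simp
    moreover have "exp (?c * \<tau>) * exp (- ?c * \<tau>) = 1"
      by (simp flip: exp_add)
    ultimately show ?thesis
      by (metis mult_nonneg_nonneg mult_right_mono exp_ge_zero)
  qed
  then show ?thesis
    unfolding V01_def by blast
qed

lemma mass_graph_laplacian:
  fixes w :: "'v::finite \<Rightarrow> 'v \<Rightarrow> real"
  assumes wg: "weighted_graph w" and card: "CARD('v) \<ge> 2"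
  shows "mass w r (graph_laplacian w r v) = 0"
proof -
  have "graph_laplacian w r v i * deg w i powr r = (\<Sum>j\<in>UNIV. w i j * (v i - v j))" for i
  proof -
    have "graph_laplacian w r v i * deg w i powr r =
        (deg w i powr (- r) * deg w i powr r) * (\<Sum>j\<in>UNIV. w i j * (v i - v j))"
      unfolding graph_laplacian_def by (simp only: ac_simps)
    also have "deg w i powr (- r) * deg w i powr r = 1"
      using deg_pos[OF wg card, of i] by (simp flip: powr_add)
    finally show ?thesis by simp
  qed
  then have "mass w r (graph_laplacian w r v) = (\<Sum>i\<in>UNIV. \<Sum>j\<in>UNIV. w i j * (v i - v j))"
    unfolding mass_def ipV_def by simp
  also have "\<dots> = (\<Sum>i\<in>UNIV. \<Sum>j\<in>UNIV. w i j * v i) - (\<Sum>i\<in>UNIV. \<Sum>j\<in>UNIV. w i j * v j)"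
    by (simp add: right_diff_distrib sum_subtractf)
  also have "(\<Sum>i\<in>UNIV. \<Sum>j\<in>UNIV. w i j * v j) = (\<Sum>j\<in>UNIV. \<Sum>i\<in>UNIV. w j i * v j)"
    by (subst sum.swap) (simp only: weighted_graph_sym[OF wg])
  finally show ?thesis by simp
qed

lemma heat_mass:
  fixes w :: "'v::finite \<Rightarrow> 'v \<Rightarrow> real"
  assumes wg: "weighted_graph w" and card: "CARD('v) \<ge> 2"
  shows "mass w r (heat w r \<tau> u) = mass w r u"
proof -
  define g where "g = (\<lambda>i k. (- \<tau>) ^ k / fact k * (graph_laplacian w r ^^ k) u i)"
  have "summable (\<lambda>k. \<bar>g i k\<bar>)" for i
    unfolding g_def using lap_shift_nonneg[OF wg, of r]
    by (intro summable_exp_series_funpow[where K = "3 * lap_shift w r"]) (simp_all add: graph_laplacian_bound[OF wg])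
  then have g_summable: "summable (\<lambda>k. g i k * c)" for i c
    using summable_rabs_cancel summable_mult2 by blast
  have "mass w r (heat w r \<tau> u) = (\<Sum>i\<in>UNIV. suminf (g i) * deg w i powr r)"
    unfolding mass_def ipV_def heat_def g_def by simp
  also have "\<dots> = (\<Sum>i\<in>UNIV. \<Sum>k. g i k * deg w i powr r)"
    using g_summable[of _ 1] by (simp add: suminf_mult2)
  also have "\<dots> = (\<Sum>k. \<Sum>i\<in>UNIV. g i k * deg w i powr r)"
    by (rule suminf_sum[symmetric]) (rule g_summable)
  also have "\<dots> = (\<Sum>k\<in>{0}. \<Sum>i\<in>UNIV. g i k * deg w i powr r)"
  proof (rule suminf_finite)
    fix k :: nat assume "k \<notin> {0}"
    then obtain m where k: "k = Suc m" by (cases k) auto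
    have "(\<Sum>i\<in>UNIV. g i k * deg w i powr r) =
        (- \<tau>) ^ k / fact k * mass w r (graph_laplacian w r ((graph_laplacian w r ^^ m) u))"
      unfolding g_def k mass_def ipV_def by (simp add: sum_distrib_left mult.assoc)
    then show "(\<Sum>i\<in>UNIV. g i k * deg w i powr r) = 0"
      by (simp add: mass_graph_laplacian[OF wg card])
  qed simp
  also have "\<dots> = mass w r u"
    unfolding g_def mass_def ipV_def by simp
  finally show ?thesis .
qed

lemma clip_profile_eq_max_min:
  assumes "lam < 1"
  shows "clip_profile lam x \<nu> = max 0 (min 1 ((x - \<nu>) / (1 - lam)))"
  unfolding clip_profile_def using assms by (auto simp: field_simps min_def max_def)

lemma clip_profile_in_V01: "(\<lambda>i. clip_profile lam (x i) \<nu>) \<in> V01"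
  unfolding V01_def clip_profile_def by (auto simp: divide_simps)

lemma clip_profile_variational_ineq:
  assumes "0 \<le> v" and "v \<le> 1"
  shows "0 \<le> (v - clip_profile lam x \<nu>) * ((1 - lam) * clip_profile lam x \<nu> - x + \<nu>)"
proof (cases "x \<le> \<nu>")
  case True
  then show ?thesis
    using assms unfolding clip_profile_def by simp
next
  case False
  show ?thesis
  proof (cases "\<nu> \<le> x - (1 - lam)")
    case True
    then show ?thesis
      using \<open>\<not> x \<le> \<nu>\<close> assms unfolding clip_profile_def by (simp add: mult_nonpos_nonpos)
  next
    case False
    then have "0 < 1 - lam" using \<open>\<not> x \<le> \<nu>\<close> by simp
    then show ?thesis
      using False \<open>\<not> x \<le> \<nu>\<close> unfolding clip_profile_def by simp
  qed
qed

lemma clip_profile_strict_minimizer: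
  fixes d x v :: "'a::finite \<Rightarrow> real" and lam \<nu> :: real
  defines "u \<equiv> \<lambda>i. clip_profile lam (x i) \<nu>"
  assumes lam: "lam < 1" and d: "\<And>i. 0 < d i" and v: "v \<in> V01"
    and same_mass: "(\<Sum>i\<in>UNIV. d i * v i) = (\<Sum>i\<in>UNIV. d i * u i)" and "v \<noteq> u"
  shows "(\<Sum>i\<in>UNIV. d i * ((1 - lam) * (u i)\<^sup>2 - 2 * u i * x i))
       < (\<Sum>i\<in>UNIV. d i * ((1 - lam) * (v i)\<^sup>2 - 2 * v i * x i))"
proof -
  let ?\<phi> = "\<lambda>y i. (1 - lam) * y\<^sup>2 - 2 * y * x i"
  have pointwise: "d i * ?\<phi> (u i) i + 2 * \<nu> * (d i * u i - d i * v i) + d i * ((1 - lam) * (v i - u i)\<^sup>2)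
      \<le> d i * ?\<phi> (v i) i" for i
  proof -
    have "?\<phi> (v i) i - ?\<phi> (u i) i - 2 * \<nu> * (u i - v i) - (1 - lam) * (v i - u i)\<^sup>2
        = 2 * ((v i - u i) * ((1 - lam) * u i - x i + \<nu>))"
      by (simp add: algebra_simps power2_eq_square)
    moreover have "0 \<le> (v i - u i) * ((1 - lam) * u i - x i + \<nu>)"
      using v unfolding u_def V01_def by (simp add: clip_profile_variational_ineq)
    ultimately have "?\<phi> (u i) i + 2 * \<nu> * (u i - v i) + (1 - lam) * (v i - u i)\<^sup>2 \<le> ?\<phi> (v i) i"
      by linarith
    then have "d i * (?\<phi> (u i) i + 2 * \<nu> * (u i - v i) + (1 - lam) * (v i - u i)\<^sup>2) \<le> d i * ?\<phi> (v i) i"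
      using d[of i] by (simp add: mult_left_mono)
    then show ?thesis
      by (simp only: distrib_left right_diff_distrib mult.left_commute)
  qed
  obtain k where "v k \<noteq> u k" using \<open>v \<noteq> u\<close> by blast
  then have "0 < (\<Sum>i\<in>UNIV. d i * ((1 - lam) * (v i - u i)\<^sup>2))"
    using d lam by (intro sum_pos2[where i = k]) (auto simp: less_imp_le)
  moreover have "(\<Sum>i\<in>UNIV. d i * ?\<phi> (u i) i + 2 * \<nu> * (d i * u i - d i * v i) + d i * ((1 - lam) * (v i - u i)\<^sup>2))
      \<le> (\<Sum>i\<in>UNIV. d i * ?\<phi> (v i) i)"
    by (rule sum_mono) (rule pointwise)
  then have "(\<Sum>i\<in>UNIV. d i * ?\<phi> (u i) i) + 2 * \<nu> * ((\<Sum>i\<in>UNIV. d i * u i) - (\<Sum>i\<in>UNIV. d i * v i))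
      + (\<Sum>i\<in>UNIV. d i * ((1 - lam) * (v i - u i)\<^sup>2)) \<le> (\<Sum>i\<in>UNIV. d i * ?\<phi> (v i) i)"
    by (simp only: sum.distrib flip: sum_subtractf sum_distrib_left)
  ultimately show ?thesis
    using same_mass by simp
qed

lemma clip_profile_mass_root:
  fixes d x :: "'a::finite \<Rightarrow> real"
  assumes "0 \<le> lam" "lam < 1" and d: "\<And>i. 0 \<le> d i" and x: "x \<in> V01"
  shows "\<exists>\<nu>. 0 \<le> \<nu> \<and> \<nu> \<le> lam \<and> (\<Sum>i\<in>UNIV. d i * clip_profile lam (x i) \<nu>) = (\<Sum>i\<in>UNIV. d i * x i)"
proof (rule IVT2')
  have x01: "0 \<le> x i" "x i \<le> 1" for i
    using x unfolding V01_def by auto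
  show "continuous_on {0..lam} (\<lambda>\<nu>. \<Sum>i\<in>UNIV. d i * clip_profile lam (x i) \<nu>)"
    unfolding clip_profile_eq_max_min[OF \<open>lam < 1\<close>] by (intro continuous_intros) (use \<open>lam < 1\<close> in auto)
  have "x i \<le> clip_profile lam (x i) 0" for i
    unfolding clip_profile_eq_max_min[OF \<open>lam < 1\<close>] using x01[of i] assms(1,2)
    by (auto simp: le_divide_eq intro!: mult_left_le)
  then show "(\<Sum>i\<in>UNIV. d i * x i) \<le> (\<Sum>i\<in>UNIV. d i * clip_profile lam (x i) 0)"
    by (intro sum_mono mult_left_mono d)
  have "clip_profile lam (x i) lam \<le> x i" for i
  proof -
    have "(x i - lam) / (1 - lam) \<le> x i"
      using x01[of i] assms(1,2) by (simp add: divide_le_eq algebra_simps mult_left_le)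
    then show ?thesis
      unfolding clip_profile_eq_max_min[OF \<open>lam < 1\<close>] using x01[of i] by auto
  qed
  then show "(\<Sum>i\<in>UNIV. d i * clip_profile lam (x i) lam) \<le> (\<Sum>i\<in>UNIV. d i * x i)"
    by (intro sum_mono mult_left_mono d)
qed fact

lemma sum_range_fibres:
  fixes f :: "'a::finite \<Rightarrow> 'b" and d :: "'a \<Rightarrow> 'c::comm_semiring_0"
  shows "(\<Sum>\<alpha>\<in>range f. (\<Sum>i\<in>{i. f i = \<alpha>}. d i) * g \<alpha>) = (\<Sum>i\<in>UNIV. d i * g (f i))"
proof -
  have "(\<Sum>i\<in>UNIV. d i * g (f i)) = (\<Sum>\<alpha>\<in>range f. \<Sum>i\<in>{i\<in>UNIV. f i = \<alpha>}. d i * g (f i))"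
    by (rule sum.image_gen) simp
  also have "\<dots> = (\<Sum>\<alpha>\<in>range f. (\<Sum>i\<in>{i. f i = \<alpha>}. d i) * g \<alpha>)"
    by (auto simp: sum_distrib_right intro!: sum.cong)
  finally show ?thesis by simp
qed

theorem theorem29:
  fixes w :: "'v::finite \<Rightarrow> 'v \<Rightarrow> real"
    and r \<tau> lam :: real and un :: "'v \<Rightarrow> real"
  assumes "weighted_graph w" and "CARD('v) \<ge> 2"
    and "0 \<le> r" and "r \<le> 1"
    and "\<tau> > 0" and "0 \<le> lam" and "lam < 1"
    and "un \<in> V01"
  defines "M \<equiv> mass w r un"
    and "U \<equiv> heat w r \<tau> un"
    and "J \<equiv> (\<lambda>u. (1 - lam) * normV_sq w r u - 2 * ipV w r u (heat w r \<tau> un))"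
    and "A \<equiv> range (heat w r \<tau> un)"
    and "a \<equiv> (\<lambda>\<alpha>. \<Sum>i\<in>{i. heat w r \<tau> un i = \<alpha>}. deg w i powr r)"
  shows "(\<exists>\<nu>. 0 \<le> \<nu> \<and> \<nu> \<le> lam \<and> M = (\<Sum>\<alpha>\<in>A. a \<alpha> * clip_profile lam \<alpha> \<nu>))
       \<and> (\<forall>\<nu>. M = (\<Sum>\<alpha>\<in>A. a \<alpha> * clip_profile lam \<alpha> \<nu>) \<longrightarrow>
            (let u' = (\<lambda>i. clip_profile lam (U i) \<nu>) in
               u' \<in> V01 \<and> mass w r u' = M \<and>
               (\<forall>v. v \<in> V01 \<and> mass w r v = M \<and> v \<noteq> u' \<longrightarrow> J u' < J v)))"
proof -
  note wg = assms(1) and card = assms(2)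
  define d where "d i = deg w i powr r" for i
  have d_pos: "0 < d i" for i
    unfolding d_def using deg_pos[OF wg card, of i] by simp
  have mass_eq: "mass w r v = (\<Sum>i\<in>UNIV. d i * v i)" for v
    unfolding mass_def ipV_def d_def by (simp add: mult.commute)
  have J_eq: "J v = (\<Sum>i\<in>UNIV. d i * ((1 - lam) * (v i)\<^sup>2 - 2 * v i * U i))" for v
    unfolding J_def normV_sq_def ipV_def U_def d_def
    by (simp add: sum_distrib_left sum_subtractf sum.distrib algebra_simps power2_eq_square)
  have U_V01: "U \<in> V01"
    unfolding U_def using heat_in_V01[OF wg assms(8)] assms(5) by simp
  have U_mass: "(\<Sum>i\<in>UNIV. d i * U i) = M"
    unfolding M_def U_def mass_eq[symmetric] by (rule heat_mass[OF wg card])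
  have profile_sum: "(\<Sum>\<alpha>\<in>A. a \<alpha> * clip_profile lam \<alpha> \<nu>) = (\<Sum>i\<in>UNIV. d i * clip_profile lam (U i) \<nu>)" for \<nu>
    unfolding A_def a_def U_def d_def by (rule sum_range_fibres)
  show ?thesis
    unfolding profile_sum Let_def
  proof (intro conjI allI impI)
    show "\<exists>\<nu>. 0 \<le> \<nu> \<and> \<nu> \<le> lam \<and> M = (\<Sum>i\<in>UNIV. d i * clip_profile lam (U i) \<nu>)"
      using clip_profile_mass_root[OF assms(6,7), of d U] d_pos U_V01 U_mass by (auto simp: less_imp_le)
    fix \<nu> assume root: "M = (\<Sum>i\<in>UNIV. d i * clip_profile lam (U i) \<nu>)"
    show "(\<lambda>i. clip_profile lam (U i) \<nu>) \<in> V01"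
      by (rule clip_profile_in_V01)
    show "mass w r (\<lambda>i. clip_profile lam (U i) \<nu>) = M"
      unfolding mass_eq root ..
    fix v assume "v \<in> V01 \<and> mass w r v = M \<and> v \<noteq> (\<lambda>i. clip_profile lam (U i) \<nu>)"
    then show "J (\<lambda>i. clip_profile lam (U i) \<nu>) < J v"
      unfolding J_eq mass_eq root using clip_profile_strict_minimizer[where d = d and x = U, OF assms(7) d_pos] by blast
  qed
qed

end
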